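(* Let $K\subseteq\mathbb{R}^n$ be a proper cone and let $A\in\mathbb{R}^{n\times n}$ be $K$-monotone. Let $A=U-V$ be a $K$-regular splitting. Let $U=F-G=\overline{F}-\overline{G}$ be two $K$-weak regular splittings of type II of $U$ such that $VF^{-1}G=GF^{-1}V$ and $V\overline{F}^{-1}\overline{G}=\overline{G}\,\overline{F}^{-1}V$. For a positive integer $s$ let $$T_{s}=(F^{-1}G)^{s}+\sum_{j=0}^{s-1}(F^{-1}G)^{j}F^{-1}V,\qquad \overline{T}_{s}=(\overline{F}^{-1}\overline{G})^{s}+\sum_{j=0}^{s-1}(\overline{F}^{-1}\overline{G})^{j}\overline{F}^{-1}V.$$ If $G\geq_K GF^{-1}G$ and $\overline{G}\,\overline{F}^{-1}\geq_K GF^{-1}$, then $\rho(T_s)\leq\rho(\overline{T}_s)<1$.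
   Context: A proper cone $K\subseteq\mathbb{R}^n$ is a closed, convex, pointed, solid cone. For $M\in\mathbb{R}^{n\times n}$, $M\geq_K 0$ means $MK\subseteq K$, and $M\geq_K N$ means $M-N\geq_K0$. A matrix $A$ is $K$-monotone if $A$ is nonsingular and $A^{-1}\geq_K 0$. A splitting $A=U-V$ (with $U$ nonsingular) is $K$-regular if $U^{-1}\geq_K 0$ and $V\geq_K 0$; it is a $K$-weak regular splitting of type II if $U^{-1}\geq_K 0$ and $VU^{-1}\geq_K 0$. $\rho$ denotes spectral radius. *)

theory Defs
  imports "HOL-Analysis.Analysis"
begin

definition proper_cone :: "(real ^ 'n) set \<Rightarrow> bool" where
  "proper_cone K \<longleftrightarrow> cone K \<and> closed K \<and> convex K \<and>
     K \<inter> uminus ` K = {0} \<and> interior K \<noteq> {}"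

definition K_nonneg :: "(real ^ 'n) set \<Rightarrow> real ^ 'n ^ 'n \<Rightarrow> bool" where
  "K_nonneg K M \<longleftrightarrow> (\<forall>x\<in>K. M *v x \<in> K)"

definition K_ge :: "(real ^ 'n) set \<Rightarrow> real ^ 'n ^ 'n \<Rightarrow> real ^ 'n ^ 'n \<Rightarrow> bool" where
  "K_ge K M N \<longleftrightarrow> K_nonneg K (M - N)"

definition K_monotone :: "(real ^ 'n) set \<Rightarrow> real ^ 'n ^ 'n \<Rightarrow> bool" where
  "K_monotone K A \<longleftrightarrow> invertible A \<and> K_nonneg K (matrix_inv A)"

definition K_regular_splitting ::
  "(real ^ 'n) set \<Rightarrow> real ^ 'n ^ 'n \<Rightarrow> real ^ 'n ^ 'n \<Rightarrow> real ^ 'n ^ 'n \<Rightarrow> bool" where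
  "K_regular_splitting K A U V \<longleftrightarrow> A = U - V \<and> invertible U \<and>
     K_nonneg K (matrix_inv U) \<and> K_nonneg K V"

definition K_weak_regular_splitting_II ::
  "(real ^ 'n) set \<Rightarrow> real ^ 'n ^ 'n \<Rightarrow> real ^ 'n ^ 'n \<Rightarrow> real ^ 'n ^ 'n \<Rightarrow> bool" where
  "K_weak_regular_splitting_II K A U V \<longleftrightarrow> A = U - V \<and> invertible U \<and>
     K_nonneg K (matrix_inv U) \<and> K_nonneg K (V ** matrix_inv U)"

definition cmat :: "real ^ 'n ^ 'm \<Rightarrow> complex ^ 'n ^ 'm" where
  "cmat M = (\<chi> i j. complex_of_real (M $ i $ j))"

definition spectral_radius :: "real ^ 'n ^ 'n \<Rightarrow> real" where
  "spectral_radius M =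
     Max {cmod l | l. \<exists>v :: complex ^ 'n. v \<noteq> 0 \<and> cmat M *v v = l *s v}"

primrec mpow :: "real ^ 'n ^ 'n \<Rightarrow> nat \<Rightarrow> real ^ 'n ^ 'n" where
  "mpow M 0 = mat 1"
| "mpow M (Suc k) = M ** mpow M k"

end

(*
  Write R = sum_{j<s} (F^-1 G)^j F^-1 and W = G F^-1, so that T_s = I - R A and U R = I - W^s.
  Since U is K-monotone and W = I - U F^-1 is K-nonnegative, the partial sums of F^-1 W^k are
  K-bounded by U^-1; a linear functional that is positive on K (K is closed and pointed) then
  forces W^k -> 0.  Hence R is invertible, and T_s is similar to M = I - A R = W^s + V R, which is
  K-nonnegative and, by the same argument with A in place of U, has powers tending to 0.  So
  rho(T_s) = rho(M) < 1 for every K-weak regular splitting of type II.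

  For the comparison, G >=_K G F^-1 G makes F^-1 G = U^-1 (G - G F^-1 G) and hence T_s
  K-nonnegative, and A^-1 Mb - T_s A^-1 = R - Rb = U^-1 (Wb^s - W^s) >=_K 0.  Inductively
  A^-1 Mb^k >=_K T_s^k A^-1 >=_K 0, so on K, and since K is solid everywhere, the powers of T_s
  grow no faster than those of Mb: rho(T_s) <= rho(Mb) = rho(Tb_s).
*)

theory Submission
  imports Defs "Jordan_Normal_Form.Spectral_Radius"
begin

hide_const (open) Matrix.mat Spectral_Radius.spectral_radius Spectral_Radius.spectrum
no_notation Matrix.vec_index (infixl "$" 100)

section \<open>Matrix algebra\<close>

lemma matrix_inv_right:
  fixes A :: "'a::semiring_1^'n^'m"
  assumes "invertible A"
  shows "A ** matrix_inv A = mat 1"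
  using someI_ex[OF assms[unfolded invertible_def]] by (simp add: matrix_inv_def)

lemma matrix_inv_left:
  fixes A :: "'a::semiring_1^'n^'m"
  assumes "invertible A"
  shows "matrix_inv A ** A = mat 1"
  using someI_ex[OF assms[unfolded invertible_def]] by (simp add: matrix_inv_def)

lemma matrix_inv_mult_cancel_left:
  fixes A :: "'a::semiring_1^'n^'m"
  shows "invertible A \<Longrightarrow> matrix_inv A ** (A ** B) = B"
  by (simp add: matrix_mul_assoc matrix_inv_left)

lemma matrix_mult_inv_cancel_right:
  fixes A :: "'a::semiring_1^'n^'m"
  shows "invertible A \<Longrightarrow> B ** A ** matrix_inv A = B"
  by (simp add: matrix_inv_right flip: matrix_mul_assoc)

lemma invertible_matrix_inv:
  fixes A :: "'a::semiring_1^'n^'m"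
  assumes "invertible A"
  shows "invertible (matrix_inv A)"
  using matrix_inv_left[OF assms] matrix_inv_right[OF assms]
  unfolding invertible_def[of "matrix_inv A"] by blast

lemma matrix_add_rdistrib: "((A::'a::semiring_1^'n^'m) + B) ** C = A ** C + B ** C"
  by (simp add: matrix_matrix_mult_def Finite_Cartesian_Product.vec_eq_iff sum.distrib distrib_right)

lemma matrix_diff_ldistrib: "(A::'a::ring_1^'n^'m) ** (B - C) = A ** B - A ** C"
  by (simp add: matrix_matrix_mult_def Finite_Cartesian_Product.vec_eq_iff sum_subtractf right_diff_distrib)

lemma matrix_diff_rdistrib: "((A::'a::ring_1^'n^'m) - B) ** C = A ** C - B ** C"
  by (simp add: matrix_matrix_mult_def Finite_Cartesian_Product.vec_eq_iff sum_subtractf left_diff_distrib)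

lemma matrix_sum_rdistrib: "(\<Sum>i\<in>I. A i) ** (C::'a::semiring_1^'n^'m) = (\<Sum>i\<in>I. A i ** C)"
  by (induction I rule: infinite_finite_induct) (auto simp: matrix_add_rdistrib)

lemma matrix_vector_mult_sum_rdistrib:
  "(\<Sum>i\<in>I. A i) *v (x::'a::semiring_1^'n) = (\<Sum>i\<in>I. A i *v x)"
  by (induction I rule: infinite_finite_induct) (auto simp: matrix_vector_mult_add_rdistrib)

lemma scaleR_matrix_vector_assoc: "(c *\<^sub>R A) *v x = c *\<^sub>R (A *v (x :: real^'n))"
  by (simp add: Finite_Cartesian_Product.vec_eq_iff matrix_vector_mult_def sum_distrib_left mult_ac)

lemma mpow_commute: "mpow M k ** M = M ** mpow M k"
  by (induction k) (auto simp: matrix_mul_assoc[symmetric])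

lemma mpow_Suc_right: "mpow M (Suc k) = mpow M k ** M"
  by (simp add: mpow_commute)

lemma mpow_add: "mpow M (a + b) = mpow M a ** mpow M b"
  by (induction a) (auto simp: matrix_mul_assoc)

lemma mpow_intertwine:
  assumes "M ** P = P ** N"
  shows "mpow M k ** P = P ** mpow N k"
proof (induction k)
  case (Suc k)
  have "mpow M (Suc k) ** P = M ** (mpow M k ** P)" by (simp add: matrix_mul_assoc)
  also have "\<dots> = (M ** P) ** mpow N k" by (simp add: Suc matrix_mul_assoc)
  also have "\<dots> = P ** mpow N (Suc k)" by (simp add: assms matrix_mul_assoc)
  finally show ?case .
qed simp

lemma mpow_scaleR: "mpow (c *\<^sub>R M) k = (c ^ k) *\<^sub>R mpow M k"
  by (induction k) (simp_all add: matrix_scalar_ac scalar_matrix_assoc[symmetric])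

section \<open>Proper cones and \<open>K\<close>-nonnegative matrices\<close>

lemma proper_cone_closed_add_scaleR:
  assumes "proper_cone K"
  shows "(\<forall>x\<in>K. \<forall>y\<in>K. x + y \<in> K) \<and> (\<forall>x\<in>K. \<forall>c\<ge>0. c *\<^sub>R x \<in> K)"
proof -
  have "convex K \<and> cone K" using assms unfolding proper_cone_def by simp
  then show ?thesis by (rule convex_cone[THEN iffD1])
qed

lemma proper_cone_add: "proper_cone K \<Longrightarrow> x \<in> K \<Longrightarrow> y \<in> K \<Longrightarrow> x + y \<in> K"
  using proper_cone_closed_add_scaleR by blast

lemma proper_cone_scaleR: "proper_cone K \<Longrightarrow> x \<in> K \<Longrightarrow> 0 \<le> c \<Longrightarrow> c *\<^sub>R x \<in> K"
  using proper_cone_closed_add_scaleR by blast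

lemma proper_cone_zero:
  assumes "proper_cone K"
  shows "0 \<in> K"
proof -
  from assms obtain x where "x \<in> K"
    unfolding proper_cone_def by blast
  from proper_cone_scaleR[OF assms this, of 0] show ?thesis by simp
qed

lemma proper_cone_pointed:
  assumes "proper_cone K" "x \<in> K" "- x \<in> K"
  shows "x = 0"
proof -
  have "x \<in> uminus ` K" using assms(3) by (rule rev_image_eqI) simp
  with assms(1,2) show ?thesis unfolding proper_cone_def by blast
qed

lemma proper_cone_sum: "proper_cone K \<Longrightarrow> (\<And>i. i \<in> I \<Longrightarrow> f i \<in> K) \<Longrightarrow> (\<Sum>i\<in>I. f i) \<in> K"
  by (induction I rule: infinite_finite_induct) (auto simp: proper_cone_zero proper_cone_add)

lemma K_nonneg_apply: "K_nonneg K M \<Longrightarrow> x \<in> K \<Longrightarrow> M *v x \<in> K"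
  unfolding K_nonneg_def by blast

lemma K_nonneg_mult: "K_nonneg K M \<Longrightarrow> K_nonneg K N \<Longrightarrow> K_nonneg K (M ** N)"
  unfolding K_nonneg_def by (simp add: matrix_vector_mul_assoc[symmetric])

lemma K_nonneg_add: "proper_cone K \<Longrightarrow> K_nonneg K M \<Longrightarrow> K_nonneg K N \<Longrightarrow> K_nonneg K (M + N)"
  unfolding K_nonneg_def by (simp add: matrix_vector_mult_add_rdistrib proper_cone_add)

lemma K_nonneg_sum:
  "proper_cone K \<Longrightarrow> (\<And>i. i \<in> I \<Longrightarrow> K_nonneg K (M i)) \<Longrightarrow> K_nonneg K (\<Sum>i\<in>I. M i)"
  unfolding K_nonneg_def by (simp add: matrix_vector_mult_sum_rdistrib proper_cone_sum)

lemma K_nonneg_zero: "proper_cone K \<Longrightarrow> K_nonneg K 0"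
  unfolding K_nonneg_def by (simp add: proper_cone_zero)

lemma K_nonneg_id: "K_nonneg K (mat 1)"
  unfolding K_nonneg_def by simp

lemma K_nonneg_mpow: "K_nonneg K M \<Longrightarrow> K_nonneg K (mpow M k)"
  by (induction k) (auto simp: K_nonneg_id K_nonneg_mult)

lemma K_ge_mpow:
  assumes K: "proper_cone K" and "K_nonneg K N" "K_ge K M N"
  shows "K_ge K (mpow M k) (mpow N k)"
  unfolding K_ge_def
proof (induction k)
  case 0
  show ?case by (simp add: K_nonneg_zero[OF K])
next
  case (Suc k)
  have "K_nonneg K M"
    using K_nonneg_add[OF K assms(2) assms(3)[unfolded K_ge_def]] by simp
  then have "K_nonneg K (M ** (mpow M k - mpow N k) + (M - N) ** mpow N k)"
    using assms by (intro K_nonneg_add K_nonneg_mult K_nonneg_mpow Suc) (auto simp: K_ge_def)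
  moreover have "M ** (mpow M k - mpow N k) + (M - N) ** mpow N k = mpow M (Suc k) - mpow N (Suc k)"
    by (simp add: matrix_diff_ldistrib matrix_diff_rdistrib)
  ultimately show ?case by simp
qed

lemma convex_proper_cone_Diff_zero:
  fixes K :: "(real^'n) set"
  assumes K: "proper_cone K"
  shows "convex (K - {0})"
  unfolding convex_def
proof (intro ballI allI impI)
  fix x y :: "real^'n" and u v :: real
  assume x: "x \<in> K - {0}" and y: "y \<in> K - {0}" and uv: "0 \<le> u" "0 \<le> v" "u + v = 1"
  have ux: "u *\<^sub>R x \<in> K" and vy: "v *\<^sub>R y \<in> K"
    using proper_cone_scaleR[OF K] x y uv by auto
  have "u *\<^sub>R x + v *\<^sub>R y \<noteq> 0"
  proof
    assume "u *\<^sub>R x + v *\<^sub>R y = 0"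
    then have "- (u *\<^sub>R x) = v *\<^sub>R y" by (simp add: neg_eq_iff_add_eq_0)
    then have "u *\<^sub>R x = 0" using proper_cone_pointed[OF K ux] vy by simp
    with \<open>- (u *\<^sub>R x) = v *\<^sub>R y\<close> x y uv show False by auto
  qed
  with proper_cone_add[OF K ux vy] show "u *\<^sub>R x + v *\<^sub>R y \<in> K - {0}" by simp
qed

text \<open>A linear functional that is positive on the compact base \<open>K \<inter> sphere 0 1\<close>, obtained
  by separating \<open>0\<close> from the convex hull of that base.\<close>

lemma proper_cone_positive_functional:
  fixes K :: "(real^'n) set"
  assumes K: "proper_cone K"
  obtains e c where "0 < c" "\<And>x. x \<in> K \<Longrightarrow> c * norm x \<le> e \<bullet> x"
proof -
  define B where "B = K \<inter> sphere (0::real^'n) 1"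
  have "compact B"
    using K unfolding B_def proper_cone_def by (intro closed_Int_compact) auto
  then have "closed (convex hull B)"
    by (intro compact_imp_closed compact_convex_hull)
  moreover have "convex hull B \<subseteq> K - {0}"
    by (rule hull_minimal) (auto simp: B_def convex_proper_cone_Diff_zero[OF K])
  ultimately obtain e c where c: "0 < c" and sep: "\<forall>x\<in>convex hull B. c < e \<bullet> x"
    using separating_hyperplane_closed_0[OF convex_convex_hull] by blast
  have "c * norm x \<le> e \<bullet> x" if x: "x \<in> K" for x
  proof (cases "x = 0")
    case False
    have "(1 / norm x) *\<^sub>R x \<in> B"
      unfolding B_def using proper_cone_scaleR[OF K x, of "1 / norm x"] False by auto
    then have "c < e \<bullet> ((1 / norm x) *\<^sub>R x)"
      using sep hull_subset[of B convex] by blast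
    then show ?thesis using False by (simp add: field_simps)
  qed simp
  with c that show ?thesis by blast
qed

lemma proper_cone_Lim_null_comparison:
  fixes f g :: "'a \<Rightarrow> real^'n"
  assumes K: "proper_cone K" and f: "\<And>k. f k \<in> K" and gf: "\<And>k. g k - f k \<in> K"
    and g: "(g \<longlongrightarrow> 0) F"
  shows "(f \<longlongrightarrow> 0) F"
proof -
  obtain e c where c: "0 < c" and e: "\<And>x. x \<in> K \<Longrightarrow> c * norm x \<le> e \<bullet> x"
    using proper_cone_positive_functional[OF K] by blast
  have bound: "\<forall>k. norm (f k) \<le> (norm e / c) * norm (g k)"
  proof
    fix k
    have "0 \<le> c * norm (g k - f k)" using c by simp
    then have "0 \<le> e \<bullet> (g k - f k)" using e[OF gf] by (rule order.trans)
    then have "c * norm (f k) \<le> e \<bullet> g k"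
      using e[OF f[of k]] by (simp add: inner_diff_right)
    also have "\<dots> \<le> norm e * norm (g k)"
      by (rule norm_cauchy_schwarz)
    finally show "norm (f k) \<le> (norm e / c) * norm (g k)" using c by (simp add: field_simps)
  qed
  show ?thesis
    by (rule Lim_null_comparison[OF always_eventually[OF bound]
          tendsto_mult_right_zero[OF tendsto_norm_zero[OF g]]])
qed

lemma proper_cone_bounded_sums_tendsto_zero:
  fixes x :: "nat \<Rightarrow> real^'n"
  assumes K: "proper_cone K" and x: "\<And>k. x k \<in> K" and b: "\<And>N. b - (\<Sum>k<N. x k) \<in> K"
  shows "x \<longlonglongrightarrow> 0"
proof -
  obtain e c where c: "0 < c" and e: "\<And>x. x \<in> K \<Longrightarrow> c * norm x \<le> e \<bullet> x"
    using proper_cone_positive_functional[OF K] by blast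
  have nonneg: "0 \<le> e \<bullet> y" if "y \<in> K" for y
  proof -
    have "0 \<le> c * norm y" using c by simp
    then show ?thesis using e[OF that] by (rule order.trans)
  qed
  have "(\<Sum>k<N. e \<bullet> x k) \<le> e \<bullet> b" for N
    using nonneg[OF b[of N]] by (simp add: inner_diff_right inner_sum_right)
  then have "summable (\<lambda>k. e \<bullet> x k)"
    by (rule summableI_nonneg_bounded[OF nonneg[OF x]])
  then have "(\<lambda>k. (e \<bullet> x k) / c) \<longlonglongrightarrow> 0"
    by (intro tendsto_divide_zero summable_LIMSEQ_zero)
  moreover have "\<forall>k. norm (x k) \<le> (e \<bullet> x k) / c"
    using e[OF x] c by (simp add: pos_le_divide_eq mult.commute)
  ultimately show ?thesis
    by (intro Lim_null_comparison[OF always_eventually, of x])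
qed

text \<open>A proper cone is solid, so it spans the whole space.\<close>

lemma proper_cone_tendsto_zero_everywhere:
  fixes M :: "'a \<Rightarrow> real^'n^'m"
  assumes K: "proper_cone K" and lim: "\<And>y. y \<in> K \<Longrightarrow> ((\<lambda>k. M k *v y) \<longlongrightarrow> 0) F"
  shows "((\<lambda>k. M k *v z) \<longlongrightarrow> 0) F"
proof -
  obtain u where u: "u \<in> interior K"
    using K unfolding proper_cone_def by auto
  then obtain r where r: "0 < r" "ball u r \<subseteq> interior K"
    using open_contains_ball[THEN iffD1, OF open_interior] by blast
  define t where "t = r / (norm z + 1)"
  have t: "0 < t" using r(1) by (simp add: t_def add_nonneg_pos)
  have "0 < norm z + 1"
    using norm_ge_zero[of z] by linarith
  then have "norm (t *\<^sub>R z) < r"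
    using r(1) by (simp add: t_def field_simps)
  then have "u + t *\<^sub>R z \<in> ball u r"
    by (simp add: dist_norm)
  then have "u + t *\<^sub>R z \<in> K" "u \<in> K"
    using r(2) u interior_subset by blast+
  then have "((\<lambda>k. (1 / t) *\<^sub>R (M k *v (u + t *\<^sub>R z) - M k *v u)) \<longlongrightarrow> (1 / t) *\<^sub>R (0 - 0)) F"
    by (intro tendsto_scaleR tendsto_diff lim tendsto_const)
  moreover have "(1 / t) *\<^sub>R (M k *v (u + t *\<^sub>R z) - M k *v u) = M k *v z" for k
    using t by (simp add: matrix_vector_right_distrib matrix_vector_mult_scaleR)
  ultimately show ?thesis by simp
qed

lemma K_monotone_product_powers_tendsto_zero:
  fixes C R M :: "real^'n^'n"
  assumes K: "proper_cone K" and C: "K_monotone K C"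
    and R: "invertible R" "K_nonneg K R" and M: "K_nonneg K M" "M = mat 1 - C ** R"
  shows "(\<lambda>k. mpow M k *v z) \<longlonglongrightarrow> 0"
proof (rule proper_cone_tendsto_zero_everywhere[OF K])
  fix y assume y: "y \<in> K"
  have C_inv: "invertible C" "K_nonneg K (matrix_inv C)"
    using C unfolding K_monotone_def by auto
  have telescope: "C ** (\<Sum>k<N. R ** mpow M k) = mat 1 - mpow M N" for N
  proof (induction N)
    case (Suc N)
    have "C ** (\<Sum>k<Suc N. R ** mpow M k) = mat 1 - mpow M N + (C ** R) ** mpow M N"
      by (simp add: Suc matrix_add_ldistrib matrix_mul_assoc)
    also have "\<dots> = mat 1 - mpow M (Suc N)"
      by (simp add: M(2) matrix_diff_rdistrib)
    finally show ?case .
  qed simp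
  have "(\<lambda>k. (R ** mpow M k) *v y) \<longlonglongrightarrow> 0"
  proof (rule proper_cone_bounded_sums_tendsto_zero[OF K])
    show "(R ** mpow M k) *v y \<in> K" for k
      using R(2) M(1) y by (intro K_nonneg_apply K_nonneg_mult K_nonneg_mpow)
    show "matrix_inv C *v y - (\<Sum>k<N. (R ** mpow M k) *v y) \<in> K" for N
    proof -
      have "(\<Sum>k<N. R ** mpow M k) = matrix_inv C ** (C ** (\<Sum>k<N. R ** mpow M k))"
        by (simp add: matrix_inv_mult_cancel_left[OF C_inv(1)])
      then have "(\<Sum>k<N. (R ** mpow M k) *v y) = matrix_inv C *v y - (matrix_inv C ** mpow M N) *v y"
        by (simp add: telescope matrix_diff_ldistrib matrix_vector_mult_diff_rdistrib
            flip: matrix_vector_mult_sum_rdistrib)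
      then show ?thesis
        using C_inv(2) M(1) y by (simp add: K_nonneg_apply K_nonneg_mult K_nonneg_mpow)
    qed
  qed
  then have "(\<lambda>k. matrix_inv R *v ((R ** mpow M k) *v y)) \<longlonglongrightarrow> matrix_inv R *v 0"
    by (intro bounded_linear.tendsto[OF matrix_vector_mul_bounded_linear])
  then show "(\<lambda>k. mpow M k *v y) \<longlonglongrightarrow> 0"
    by (simp add: matrix_vector_mul_assoc matrix_inv_mult_cancel_left[OF R(1)])
qed

section \<open>Spectral radius and the growth of powers\<close>

text \<open>Finiteness and non-emptiness of the spectrum, and the boundedness of the powers of a
  matrix of spectral radius below 1, are taken from \<open>Jordan_Normal_Form\<close>, whose matrices are
  indexed by natural numbers; matrices indexed by a finite type are transferred along a fixed
  enumeration of that type.\<close>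

definition jnf_index :: "nat \<Rightarrow> 'n::finite" where
  "jnf_index = (SOME h. bij_betw h {0..<CARD('n)} UNIV)"

definition jnf_mat :: "'a^'n^'n \<Rightarrow> 'a mat" where
  "jnf_mat A = Matrix.mat CARD('n) CARD('n) (\<lambda>(i, j). A $ jnf_index i $ jnf_index j)"

definition jnf_vec :: "'a^'n \<Rightarrow> 'a Matrix.vec" where
  "jnf_vec v = Matrix.vec CARD('n) (\<lambda>i. v $ jnf_index i)"

lemma bij_jnf_index: "bij_betw (jnf_index :: nat \<Rightarrow> 'n::finite) {0..<CARD('n)} UNIV"
proof -
  have "\<exists>h. bij_betw h {0..<CARD('n)} (UNIV :: 'n set)"
    using ex_bij_betw_nat_finite[of "UNIV :: 'n set"] by simp
  then show ?thesis unfolding jnf_index_def by (rule someI_ex)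
qed

lemma jnf_index_cases:
  obtains i where "i < CARD('n)" "jnf_index i = (j :: 'n::finite)"
  using bij_jnf_index[THEN bij_betw_imp_surj_on] by (metis atLeastLessThan_iff imageE UNIV_I)

lemma jnf_index_eq_iff: "i < CARD('n) \<Longrightarrow> j < CARD('n) \<Longrightarrow> (jnf_index i :: 'n::finite) = jnf_index j \<longleftrightarrow> i = j"
  using bij_jnf_index[where 'n='n, THEN bij_betw_imp_inj_on] by (auto simp: inj_on_def)

lemma sum_jnf_index: "(\<Sum>i = 0..<CARD('n). f (jnf_index i :: 'n::finite)) = sum f UNIV"
  using sum.reindex_bij_betw[OF bij_jnf_index] .

lemma dim_jnf_mat [simp]:
  "dim_row (jnf_mat (A :: 'a^'n^'n)) = CARD('n)" "dim_col (jnf_mat A) = CARD('n)"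
  unfolding jnf_mat_def by (rule dim_row_mat, rule dim_col_mat)

lemma jnf_mat_carrier [simp]: "jnf_mat (A :: 'a^'n^'n) \<in> carrier_mat CARD('n) CARD('n)"
  by (rule carrier_matI) (rule dim_jnf_mat)+

lemma jnf_vec_carrier [simp]: "jnf_vec (v :: 'a^'n) \<in> carrier_vec CARD('n)"
  by (simp add: jnf_vec_def)

lemma jnf_mat_mult: "jnf_mat (A ** B) = jnf_mat A * jnf_mat (B :: 'a::semiring_1^'n^'n)"
  by (rule eq_matI)
    (simp_all add: jnf_mat_def matrix_matrix_mult_def scalar_prod_def flip: sum_jnf_index)

lemma jnf_mat_one: "jnf_mat (mat 1 :: 'a::semiring_1^'n^'n) = 1\<^sub>m CARD('n)"
  by (rule eq_matI) (auto simp: jnf_mat_def Finite_Cartesian_Product.mat_def jnf_index_eq_iff)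

lemma jnf_mat_mult_vec: "jnf_mat A *\<^sub>v jnf_vec v = jnf_vec (A *v (v :: 'a::semiring_1^'n))"
  by (rule eq_vecI)
    (simp_all add: jnf_mat_def jnf_vec_def matrix_vector_mult_def scalar_prod_def flip: sum_jnf_index)

lemma jnf_vec_smult: "jnf_vec (c *s v) = c \<cdot>\<^sub>v jnf_vec (v :: 'a::semiring_1^'n)"
  by (rule eq_vecI) (simp_all add: jnf_vec_def)

lemma jnf_vec_inject: "jnf_vec v = jnf_vec w \<longleftrightarrow> v = (w :: 'a^'n)"
proof
  assume eq: "jnf_vec v = jnf_vec w"
  have "v $ j = w $ j" for j
  proof -
    obtain i where "i < CARD('n)" "jnf_index i = j" by (rule jnf_index_cases)
    then show ?thesis using arg_cong[OF eq, of "\<lambda>x. vec_index x i"] by (simp add: jnf_vec_def)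
  qed
  then show "v = w" by (simp add: Finite_Cartesian_Product.vec_eq_iff)
qed simp

lemma jnf_vec_zero: "jnf_vec (0 :: 'a::zero^'n) = 0\<^sub>v CARD('n)"
  by (rule eq_vecI) (simp_all add: jnf_vec_def)

lemma jnf_vec_cases:
  assumes "w \<in> carrier_vec CARD('n::finite)"
  obtains v :: "'a^'n" where "w = jnf_vec v"
proof
  show "w = jnf_vec (\<chi> j::'n. vec_index w (inv_into {0..<CARD('n)} jnf_index j))"
    using assms bij_betw_inv_into_left[OF bij_jnf_index[where 'n='n]]
    by (intro eq_vecI) (auto simp: jnf_vec_def)
qed

lemma cmat_mult: "cmat (A ** B) = cmat A ** cmat B"
  by (simp add: Finite_Cartesian_Product.vec_eq_iff cmat_def matrix_matrix_mult_def)

lemma cmat_one: "cmat (mat 1) = mat 1"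
  by (simp add: Finite_Cartesian_Product.vec_eq_iff cmat_def Finite_Cartesian_Product.mat_def)

lemma cmat_scaleR_mult_vec: "cmat (c *\<^sub>R A) *v v = complex_of_real c *s (cmat A *v v)"
  by (simp add: Finite_Cartesian_Product.vec_eq_iff cmat_def matrix_vector_mult_def
      sum_distrib_left mult_ac)

lemma cmat_mult_vec_Re_Im:
  "cmat A *v v = (\<chi> i. Complex ((A *v (\<chi> j. Re (v $ j))) $ i) ((A *v (\<chi> j. Im (v $ j))) $ i))"
  by (simp add: Finite_Cartesian_Product.vec_eq_iff complex_eq_iff cmat_def matrix_vector_mult_def
      Re_sum Im_sum)

lemma cmat_mpow_eigenvector: "cmat A *v v = l *s v \<Longrightarrow> cmat (mpow A k) *v v = l ^ k *s v"
proof (induction k)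
  case (Suc k)
  then show ?case
    by (simp add: cmat_mult vector_scalar_commute mult_ac flip: matrix_vector_mul_assoc)
qed (simp add: cmat_one)

lemma jnf_mat_cmat_mpow: "jnf_mat (cmat (mpow A k)) = jnf_mat (cmat A) ^\<^sub>m k"
proof (induction k)
  case (Suc k)
  then show ?case by (simp add: mpow_Suc_right cmat_mult jnf_mat_mult del: mpow.simps)
qed (simp add: cmat_one jnf_mat_one)

definition eigenvalues :: "real^'n^'n \<Rightarrow> complex set" where
  "eigenvalues A = {l. \<exists>v :: complex^'n. v \<noteq> 0 \<and> cmat A *v v = l *s v}"

lemma eigenvalues_eq_spectrum:
  fixes A :: "real^'n^'n"
  shows "eigenvalues A = Spectral_Radius.spectrum (jnf_mat (cmat A))"
proof (rule Set.set_eqI, rule iffI)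
  fix l assume "l \<in> eigenvalues A"
  then obtain v where v: "v \<noteq> 0" "cmat A *v v = l *s v"
    by (auto simp: eigenvalues_def)
  then have "jnf_mat (cmat A) *\<^sub>v jnf_vec v = l \<cdot>\<^sub>v jnf_vec v"
    by (simp add: jnf_mat_mult_vec jnf_vec_smult)
  moreover have "jnf_vec v \<noteq> 0\<^sub>v CARD('n)"
    using v(1) by (simp flip: jnf_vec_zero add: jnf_vec_inject)
  ultimately show "l \<in> Spectral_Radius.spectrum (jnf_mat (cmat A))"
    unfolding Spectral_Radius.spectrum_def eigenvalue_def eigenvector_def dim_jnf_mat
    using jnf_vec_carrier[of v] by blast
next
  fix l assume "l \<in> Spectral_Radius.spectrum (jnf_mat (cmat A))"
  then obtain w where w: "w \<in> carrier_vec CARD('n)" "w \<noteq> 0\<^sub>v CARD('n)"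
      "jnf_mat (cmat A) *\<^sub>v w = l \<cdot>\<^sub>v w"
    unfolding Spectral_Radius.spectrum_def eigenvalue_def eigenvector_def by auto
  obtain v :: "complex^'n" where v: "w = jnf_vec v"
    using jnf_vec_cases[OF w(1)] by blast
  have "v \<noteq> 0" using w(2) by (auto simp: v jnf_vec_zero)
  moreover have "cmat A *v v = l *s v"
    using w(3) by (simp add: v jnf_mat_mult_vec flip: jnf_vec_smult add: jnf_vec_inject)
  ultimately show "l \<in> eigenvalues A" by (auto simp: eigenvalues_def)
qed

lemma finite_eigenvalues: "finite (eigenvalues A)"
  using card_finite_spectrum(1)[OF jnf_mat_carrier] by (simp add: eigenvalues_eq_spectrum)

lemma eigenvalues_nonempty: "eigenvalues A \<noteq> {}"
  using spectrum_non_empty[OF jnf_mat_carrier] by (simp add: eigenvalues_eq_spectrum)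

lemma spectral_radius_eq_Max: "spectral_radius A = Max (cmod ` eigenvalues A)"
  unfolding Defs.spectral_radius_def eigenvalues_def by (simp add: setcompr_eq_image)

lemma norm_eigenvalue_le_spectral_radius: "l \<in> eigenvalues A \<Longrightarrow> cmod l \<le> spectral_radius A"
  unfolding spectral_radius_eq_Max using finite_eigenvalues by (intro Max_ge) auto

lemma spectral_radius_nonneg: "0 \<le> spectral_radius A"
proof -
  obtain l where "l \<in> eigenvalues A" using eigenvalues_nonempty by blast
  then show ?thesis using norm_eigenvalue_le_spectral_radius norm_ge_zero order_trans by metis
qed

lemma spectral_radius_lessI: "(\<And>l. l \<in> eigenvalues A \<Longrightarrow> cmod l < a) \<Longrightarrow> spectral_radius A < a"
  unfolding spectral_radius_eq_Max using finite_eigenvalues eigenvalues_nonempty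
  by (subst Max_less_iff) auto

lemma spectral_radius_scaleR_le:
  assumes "0 < c"
  shows "spectral_radius (c *\<^sub>R A) \<le> c * spectral_radius A"
  unfolding spectral_radius_eq_Max[of "c *\<^sub>R A"]
proof (subst Max_le_iff; (intro ballI)?)
  fix r assume "r \<in> cmod ` eigenvalues (c *\<^sub>R A)"
  then obtain l v where r: "r = cmod l" and v: "v \<noteq> 0" "cmat (c *\<^sub>R A) *v v = l *s v"
    by (auto simp: eigenvalues_def)
  have "cmat A *v v = (l / complex_of_real c) *s v"
    using v(2) assms by (simp add: cmat_scaleR_mult_vec Finite_Cartesian_Product.vec_eq_iff field_simps)
  with v(1) have "l / complex_of_real c \<in> eigenvalues A"
    by (auto simp: eigenvalues_def)
  moreover have "cmod (l / complex_of_real c) = cmod l / c"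
    using assms by (simp add: norm_divide)
  ultimately have "cmod l / c \<le> spectral_radius A"
    using norm_eigenvalue_le_spectral_radius by fastforce
  then show "r \<le> c * spectral_radius A"
    using assms by (simp add: r field_simps)
qed (use finite_eigenvalues eigenvalues_nonempty in auto)

lemma spectral_radius_jnf: "spectral_radius A = Spectral_Radius.spectral_radius (jnf_mat (cmat A))"
  by (simp add: spectral_radius_eq_Max eigenvalues_eq_spectrum Spectral_Radius.spectral_radius_def)

lemma mpow_entries_bounded:
  fixes A :: "real^'n^'n"
  assumes "spectral_radius A < \<beta>"
  obtains C where "\<And>k i j. \<bar>mpow A k $ i $ j\<bar> \<le> C * \<beta> ^ k"
proof -
  have \<beta>: "0 < \<beta>" using assms spectral_radius_nonneg[of A] by linarith
  define X where "X = (1 / \<beta>) *\<^sub>R A"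
  have "spectral_radius X \<le> spectral_radius A / \<beta>"
    using spectral_radius_scaleR_le[of "1 / \<beta>" A] \<beta> by (simp add: X_def)
  also have "\<dots> < 1" using assms \<beta> by simp
  finally obtain C where C: "\<And>k. norm_bound (jnf_mat (cmat X) ^\<^sub>m k) C"
    using spectral_radius_jnf_norm_bound_less_1_upper_triangular[OF jnf_mat_carrier]
    by (auto simp: spectral_radius_jnf)
  have "\<bar>mpow A k $ i $ j\<bar> \<le> C * \<beta> ^ k" for k i j
  proof -
    obtain a b where ab: "a < CARD('n)" "jnf_index a = i" "b < CARD('n)" "jnf_index b = j"
      by (metis jnf_index_cases)
    have "norm (jnf_mat (cmat (mpow X k)) $$ (a, b)) \<le> C"
      using C[of k] ab unfolding norm_bound_def jnf_mat_cmat_mpow[symmetric] by simp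
    then have "\<bar>mpow X k $ i $ j\<bar> \<le> C"
      using ab by (simp add: jnf_mat_def cmat_def)
    then have "\<bar>mpow A k $ i $ j\<bar> / \<beta> ^ k \<le> C"
      using \<beta> by (simp add: X_def mpow_scaleR abs_mult power_one_over)
    then show ?thesis using \<beta> by (simp add: pos_divide_le_eq)
  qed
  then show ?thesis by (rule that)
qed

lemma norm_mpow_mult_vec_le:
  fixes A :: "real^'n^'n"
  assumes "spectral_radius A < \<beta>"
  obtains C where "\<And>k. norm (mpow A k *v z) \<le> C * \<beta> ^ k"
proof -
  obtain C where C: "\<And>k i j. \<bar>mpow A k $ i $ j\<bar> \<le> C * \<beta> ^ k"
    using mpow_entries_bounded[OF assms] by blast
  define Z where "Z = (\<Sum>j\<in>UNIV. \<bar>z $ j\<bar>)"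
  have "norm (mpow A k *v z) \<le> (CARD('n) * C * Z) * \<beta> ^ k" for k
  proof -
    have "\<bar>(mpow A k *v z) $ i\<bar> \<le> C * \<beta> ^ k * Z" for i
    proof -
      have "\<bar>(mpow A k *v z) $ i\<bar> \<le> (\<Sum>j\<in>UNIV. \<bar>mpow A k $ i $ j\<bar> * \<bar>z $ j\<bar>)"
        unfolding matrix_vector_mult_def by (simp add: order.trans[OF sum_abs] abs_mult)
      also have "\<dots> \<le> (\<Sum>j\<in>UNIV. C * \<beta> ^ k * \<bar>z $ j\<bar>)"
        by (intro sum_mono mult_right_mono C) simp
      also have "\<dots> = C * \<beta> ^ k * Z"
        by (simp add: Z_def sum_distrib_left)
      finally show ?thesis .
    qed
    then have "norm (mpow A k *v z) \<le> (\<Sum>i\<in>(UNIV :: 'n set). C * \<beta> ^ k * Z)"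
      by (intro order.trans[OF norm_le_l1_cart] sum_mono)
    then show ?thesis by (simp add: mult_ac)
  qed
  then show ?thesis by (rule that)
qed

lemma powers_decay_of_spectral_radius_less:
  fixes A :: "real^'n^'n"
  assumes "spectral_radius A < \<alpha>"
  shows "(\<lambda>k. (1 / \<alpha> ^ k) *\<^sub>R (mpow A k *v z)) \<longlonglongrightarrow> 0"
proof -
  define \<beta> where "\<beta> = (spectral_radius A + \<alpha>) / 2"
  have \<beta>: "spectral_radius A < \<beta>" "\<beta> < \<alpha>" "0 < \<beta>"
    using assms spectral_radius_nonneg[of A] by (auto simp: \<beta>_def)
  obtain C where C: "\<And>k. norm (mpow A k *v z) \<le> C * \<beta> ^ k"
    using norm_mpow_mult_vec_le[OF \<beta>(1)] by blast
  have bound: "\<forall>k. norm ((1 / \<alpha> ^ k) *\<^sub>R (mpow A k *v z)) \<le> C * (\<beta> / \<alpha>) ^ k"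
  proof
    fix k
    have "norm (mpow A k *v z) / \<alpha> ^ k \<le> C * \<beta> ^ k / \<alpha> ^ k"
      using C[of k] \<beta> by (simp add: divide_right_mono)
    then show "norm ((1 / \<alpha> ^ k) *\<^sub>R (mpow A k *v z)) \<le> C * (\<beta> / \<alpha>) ^ k"
      using \<beta> by (simp add: power_divide)
  qed
  have "(\<lambda>k. C * (\<beta> / \<alpha>) ^ k) \<longlonglongrightarrow> 0"
    using \<beta> by (intro tendsto_mult_right_zero LIMSEQ_power_zero) simp
  then show ?thesis
    by (rule Lim_null_comparison[OF always_eventually[OF bound]])
qed

lemma spectral_radius_less_of_powers_decay:
  fixes A :: "real^'n^'n"
  assumes \<alpha>: "0 < \<alpha>" and decay: "\<And>z. (\<lambda>k. (1 / \<alpha> ^ k) *\<^sub>R (mpow A k *v z)) \<longlonglongrightarrow> 0"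
  shows "spectral_radius A < \<alpha>"
proof (rule spectral_radius_lessI)
  fix l assume "l \<in> eigenvalues A"
  then obtain v where v: "v \<noteq> 0" "cmat A *v v = l *s v"
    by (auto simp: eigenvalues_def)
  obtain j where j: "v $ j \<noteq> 0"
    using v(1) by (auto simp: Finite_Cartesian_Product.vec_eq_iff)
  define x where "x w k = ((1 / \<alpha> ^ k) *\<^sub>R (mpow A k *v w)) $ j" for w k
  define re im where "re = (\<chi> i. Re (v $ i))" and "im = (\<chi> i. Im (v $ i))"
  have "(l / complex_of_real \<alpha>) ^ k * v $ j = Complex (x re k) (x im k)" for k
  proof -
    have "l ^ k * v $ j = (cmat (mpow A k) *v v) $ j"
      by (simp add: cmat_mpow_eigenvector[OF v(2)])
    also have "\<dots> = Complex ((mpow A k *v re) $ j) ((mpow A k *v im) $ j)"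
      by (simp add: cmat_mult_vec_Re_Im re_def im_def)
    finally have "l ^ k * v $ j = Complex ((mpow A k *v re) $ j) ((mpow A k *v im) $ j)" .
    then show ?thesis
      by (simp add: x_def power_divide complex_eq_iff)
  qed
  moreover have "(\<lambda>k. Complex (x re k) (x im k)) \<longlonglongrightarrow> Complex 0 0"
    unfolding x_def by (intro tendsto_Complex tendsto_vec_nth[where a = 0, simplified] decay)
  ultimately have "(\<lambda>k. (l / complex_of_real \<alpha>) ^ k * v $ j) \<longlonglongrightarrow> 0"
    by (simp add: Complex_eq)
  then have "(\<lambda>k. norm ((l / complex_of_real \<alpha>) ^ k * v $ j)) \<longlonglongrightarrow> 0"
    by (rule tendsto_norm_zero)
  then have lim: "(\<lambda>k. (cmod l / \<alpha>) ^ k * cmod (v $ j)) \<longlonglongrightarrow> 0"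
    using \<alpha> by (simp add: norm_mult norm_power norm_divide)
  show "cmod l < \<alpha>"
  proof (rule ccontr)
    assume "\<not> cmod l < \<alpha>"
    then have "cmod (v $ j) \<le> (cmod l / \<alpha>) ^ k * cmod (v $ j)" for k
      using \<alpha> by (intro mult_le_cancel_right1[THEN iffD2] impI one_le_power) auto
    then have "cmod (v $ j) \<le> 0"
      by (intro LIMSEQ_le_const[OF lim]) auto
    with j show False by simp
  qed
qed

lemma spectral_radius_le_of_mpow_factor:
  fixes A B P Q :: "real^'n^'n"
  assumes factor: "\<And>k. mpow A k = P ** mpow B k ** Q"
  shows "spectral_radius A \<le> spectral_radius B"
proof (rule dense_ge)
  fix \<alpha> assume \<alpha>: "spectral_radius B < \<alpha>"
  have "spectral_radius A < \<alpha>"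
  proof (rule spectral_radius_less_of_powers_decay)
    show "0 < \<alpha>" using \<alpha> spectral_radius_nonneg[of B] by linarith
    fix z
    have "(\<lambda>k. P *v ((1 / \<alpha> ^ k) *\<^sub>R (mpow B k *v (Q *v z)))) \<longlonglongrightarrow> P *v 0"
      by (intro bounded_linear.tendsto[OF matrix_vector_mul_bounded_linear]
          powers_decay_of_spectral_radius_less \<alpha>)
    then show "(\<lambda>k. (1 / \<alpha> ^ k) *\<^sub>R (mpow A k *v z)) \<longlonglongrightarrow> 0"
      by (simp add: factor matrix_vector_mul_assoc matrix_mul_assoc matrix_vector_mult_scaleR)
  qed
  then show "spectral_radius A \<le> \<alpha>" by simp
qed

lemma spectral_radius_similar:
  fixes A B P :: "real^'n^'n"
  assumes P: "invertible P" and AP: "A ** P = P ** B"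
  shows "spectral_radius A = spectral_radius B"
proof (rule antisym)
  have "mpow A k = P ** mpow B k ** matrix_inv P" for k
  proof -
    have "mpow A k = mpow A k ** P ** matrix_inv P"
      by (simp add: matrix_mult_inv_cancel_right[OF P])
    then show ?thesis by (simp add: mpow_intertwine[OF AP])
  qed
  then show "spectral_radius A \<le> spectral_radius B"
    by (rule spectral_radius_le_of_mpow_factor)
  have "mpow B k = matrix_inv P ** mpow A k ** P" for k
  proof -
    have "mpow B k = matrix_inv P ** (P ** mpow B k)"
      by (simp add: matrix_inv_mult_cancel_left[OF P])
    also have "P ** mpow B k = mpow A k ** P"
      by (simp add: mpow_intertwine[OF AP])
    finally show ?thesis by (simp add: matrix_mul_assoc)
  qed
  then show "spectral_radius B \<le> spectral_radius A"
    by (rule spectral_radius_le_of_mpow_factor)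
qed

lemma spectral_radius_id_minus_mult_commute:
  fixes A R :: "real^'n^'n"
  assumes "invertible R"
  shows "spectral_radius (mat 1 - R ** A) = spectral_radius (mat 1 - A ** R)"
  using assms
  by (intro spectral_radius_similar) (simp_all add: matrix_diff_ldistrib matrix_diff_rdistrib matrix_mul_assoc)

lemma K_ge_intertwined_mpow:
  assumes K: "proper_cone K" and T: "K_nonneg K T" and M: "K_nonneg K M"
    and ge: "K_ge K (P ** M) (T ** P)"
  shows "K_ge K (P ** mpow M k) (mpow T k ** P)"
  unfolding K_ge_def
proof (induction k)
  case 0
  show ?case by (simp add: K_nonneg_zero[OF K])
next
  case (Suc k)
  have "P ** mpow M (Suc k) - mpow T (Suc k) ** P
      = (P ** mpow M k - mpow T k ** P) ** M + mpow T k ** (P ** M - T ** P)"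
    by (simp add: matrix_diff_rdistrib matrix_diff_ldistrib matrix_mul_assoc mpow_Suc_right
        del: mpow.simps)
  moreover have "K_nonneg K ((P ** mpow M k - mpow T k ** P) ** M + mpow T k ** (P ** M - T ** P))"
    using Suc T M ge unfolding K_ge_def
    by (intro K_nonneg_add[OF K] K_nonneg_mult K_nonneg_mpow)
  ultimately show ?case by simp
qed

lemma spectral_radius_le_of_K_ge_intertwined:
  fixes T M P :: "real^'n^'n"
  assumes K: "proper_cone K" and P: "invertible P" "K_nonneg K P"
    and T: "K_nonneg K T" and M: "K_nonneg K M" and ge: "K_ge K (P ** M) (T ** P)"
  shows "spectral_radius T \<le> spectral_radius M"
proof (rule dense_ge)
  fix \<alpha> assume \<alpha>: "spectral_radius M < \<alpha>"
  have "spectral_radius T < \<alpha>"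
  proof (rule spectral_radius_less_of_powers_decay)
    show "0 < \<alpha>" using \<alpha> spectral_radius_nonneg[of M] by linarith
    have "(\<lambda>k. ((1 / \<alpha> ^ k) *\<^sub>R (mpow T k ** P)) *v y) \<longlonglongrightarrow> 0" if y: "y \<in> K" for y
      unfolding scaleR_matrix_vector_assoc
    proof (rule proper_cone_Lim_null_comparison[OF K])
      show "(1 / \<alpha> ^ k) *\<^sub>R ((mpow T k ** P) *v y) \<in> K" for k
        using T P(2) y \<open>0 < \<alpha>\<close>
        by (intro proper_cone_scaleR[OF K] K_nonneg_apply K_nonneg_mult K_nonneg_mpow) simp_all
      show "(1 / \<alpha> ^ k) *\<^sub>R ((P ** mpow M k) *v y) - (1 / \<alpha> ^ k) *\<^sub>R ((mpow T k ** P) *v y) \<in> K"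
        for k
        using K_ge_intertwined_mpow[OF K T M ge, of k] y \<open>0 < \<alpha>\<close> unfolding K_ge_def
        by (simp add: proper_cone_scaleR[OF K] K_nonneg_apply
            flip: scaleR_diff_right matrix_vector_mult_diff_rdistrib)
      have "(\<lambda>k. P *v ((1 / \<alpha> ^ k) *\<^sub>R (mpow M k *v y))) \<longlonglongrightarrow> P *v 0"
        by (intro bounded_linear.tendsto[OF matrix_vector_mul_bounded_linear]
            powers_decay_of_spectral_radius_less \<alpha>)
      then show "(\<lambda>k. (1 / \<alpha> ^ k) *\<^sub>R ((P ** mpow M k) *v y)) \<longlonglongrightarrow> 0"
        by (simp add: matrix_vector_mul_assoc matrix_vector_mult_scaleR)
    qed
    then have "(\<lambda>k. ((1 / \<alpha> ^ k) *\<^sub>R (mpow T k ** P)) *v (matrix_inv P *v z)) \<longlonglongrightarrow> 0" for z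
      by (rule proper_cone_tendsto_zero_everywhere[OF K])
    moreover have "(mpow T k ** P) *v (matrix_inv P *v z) = mpow T k *v z" for k z
      by (simp add: matrix_vector_mul_assoc matrix_mult_inv_cancel_right[OF P(1)])
    ultimately show "(\<lambda>k. (1 / \<alpha> ^ k) *\<^sub>R (mpow T k *v z)) \<longlonglongrightarrow> 0" for z
      by (simp add: scaleR_matrix_vector_assoc)
  qed
  then show "spectral_radius T \<le> \<alpha>" by simp
qed

lemma invertible_id_minus_mpow:
  fixes W :: "real^'n^'n"
  assumes lim: "\<And>z. (\<lambda>k. mpow W k *v z) \<longlonglongrightarrow> 0" and s: "0 < s"
  shows "invertible (mat 1 - mpow W s)"
proof -
  have "x = 0" if x: "(mat 1 - mpow W s) *v x = 0" for x
  proof -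
    have fix_x: "mpow W s *v x = x"
      using x by (simp add: matrix_vector_mult_diff_rdistrib)
    have "mpow W (s * k) *v x = x" for k
      by (induction k) (simp_all add: mpow_add fix_x flip: matrix_vector_mul_assoc)
    moreover have "(\<lambda>k. mpow W (s * k) *v x) \<longlonglongrightarrow> 0"
      using LIMSEQ_subseq_LIMSEQ[OF lim, of "\<lambda>k. s * k"] s by (simp add: strict_mono_def o_def)
    ultimately show ?thesis by (simp add: LIMSEQ_const_iff)
  qed
  then show ?thesis
    by (simp add: invertible_left_inverse matrix_left_invertible_ker)
qed

section \<open>Splittings\<close>

definition splitting_series :: "real^'n^'n \<Rightarrow> real^'n^'n \<Rightarrow> nat \<Rightarrow> real^'n^'n" where
  "splitting_series F G s = (\<Sum>j<s. mpow (matrix_inv F ** G) j ** matrix_inv F)"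

lemma splitting_series_conv:
  "splitting_series F G s = (\<Sum>j<s. matrix_inv F ** mpow (G ** matrix_inv F) j)"
  unfolding splitting_series_def
  by (intro sum.cong refl mpow_intertwine) (simp add: matrix_mul_assoc)

lemma splitting_series_Suc:
  "splitting_series F G (Suc s) = splitting_series F G s + mpow (matrix_inv F ** G) s ** matrix_inv F"
  by (simp add: splitting_series_def)

lemma splitting_series_mult_right:
  assumes "invertible F"
  shows "splitting_series F G s ** (F - G) = mat 1 - mpow (matrix_inv F ** G) s"
proof (induction s)
  case (Suc s)
  have "splitting_series F G (Suc s) ** (F - G)
      = splitting_series F G s ** (F - G) + mpow (matrix_inv F ** G) s ** (matrix_inv F ** (F - G))"
    by (simp add: splitting_series_Suc matrix_add_rdistrib matrix_mul_assoc)
  also have "\<dots> = mat 1 - mpow (matrix_inv F ** G) s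
      + mpow (matrix_inv F ** G) s ** (mat 1 - matrix_inv F ** G)"
    by (simp only: Suc) (simp add: matrix_diff_ldistrib matrix_inv_left[OF assms])
  also have "\<dots> = mat 1 - mpow (matrix_inv F ** G) (Suc s)"
    by (simp add: matrix_diff_ldistrib mpow_Suc_right del: mpow.simps)
  finally show ?case .
qed (simp add: splitting_series_def)

lemma splitting_series_mult_left:
  assumes "invertible F"
  shows "(F - G) ** splitting_series F G s = mat 1 - mpow (G ** matrix_inv F) s"
proof (induction s)
  case (Suc s)
  have "(F - G) ** splitting_series F G (Suc s)
      = (F - G) ** splitting_series F G s + ((F - G) ** matrix_inv F) ** mpow (G ** matrix_inv F) s"
    by (simp add: splitting_series_conv matrix_add_ldistrib matrix_mul_assoc)
  also have "\<dots> = mat 1 - mpow (G ** matrix_inv F) (Suc s)"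
    by (simp only: Suc) (simp add: matrix_diff_rdistrib matrix_inv_right[OF assms])
  finally show ?case .
qed (simp add: splitting_series_def)

lemma iteration_matrix_eq:
  assumes "invertible F"
  shows "mpow (matrix_inv F ** G) s + (\<Sum>j<s. mpow (matrix_inv F ** G) j ** matrix_inv F ** V)
    = mat 1 - splitting_series F G s ** (F - G - V)"
  using splitting_series_mult_right[OF assms, of G s]
  by (simp add: splitting_series_def matrix_sum_rdistrib matrix_diff_ldistrib)

lemma splitting_series_K_nonneg:
  assumes K: "proper_cone K" and FG: "K_weak_regular_splitting_II K U F G"
  shows "K_nonneg K (splitting_series F G s)"
proof -
  have "K_nonneg K (matrix_inv F)" "K_nonneg K (G ** matrix_inv F)"
    using FG unfolding K_weak_regular_splitting_II_def by auto
  then show ?thesis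
    unfolding splitting_series_conv by (simp add: K_nonneg_sum[OF K] K_nonneg_mult K_nonneg_mpow)
qed

lemma K_regular_splitting_K_monotone:
  "K_regular_splitting K A U V \<Longrightarrow> K_monotone K U"
  unfolding K_regular_splitting_def K_monotone_def by blast

lemma K_weak_regular_splitting_II_powers_tendsto_zero:
  assumes K: "proper_cone K" and U: "K_monotone K U" and FG: "K_weak_regular_splitting_II K U F G"
  shows "(\<lambda>k. mpow (G ** matrix_inv F) k *v z) \<longlonglongrightarrow> 0"
proof -
  have F: "U = F - G" "invertible F" "K_nonneg K (matrix_inv F)" "K_nonneg K (G ** matrix_inv F)"
    using FG unfolding K_weak_regular_splitting_II_def by auto
  have "G ** matrix_inv F = mat 1 - U ** matrix_inv F"
    by (simp add: F(1) matrix_diff_rdistrib matrix_inv_right[OF F(2)])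
  from K_monotone_product_powers_tendsto_zero[OF K U invertible_matrix_inv[OF F(2)] F(3,4) this]
  show ?thesis .
qed

lemma splitting_series_invertible:
  assumes K: "proper_cone K" and U: "K_monotone K U" and FG: "K_weak_regular_splitting_II K U F G"
    and s: "0 < s"
  shows "invertible (splitting_series F G s)"
proof -
  have F: "U = F - G" "invertible F" and U_inv: "invertible U"
    using FG U unfolding K_weak_regular_splitting_II_def K_monotone_def by auto
  have "splitting_series F G s = matrix_inv U ** (U ** splitting_series F G s)"
    by (simp add: matrix_inv_mult_cancel_left[OF U_inv])
  also have "\<dots> = matrix_inv U ** (mat 1 - mpow (G ** matrix_inv F) s)"
    by (simp add: F(1) splitting_series_mult_left[OF F(2)])
  finally show ?thesis
    using K_weak_regular_splitting_II_powers_tendsto_zero[OF K U FG] s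
    by (simp add: invertible_mult invertible_matrix_inv[OF U_inv] invertible_id_minus_mpow)
qed

lemma splitting_series_K_ge:
  assumes K: "proper_cone K" and U: "K_monotone K U"
    and FG: "K_weak_regular_splitting_II K U F G" and FGb: "K_weak_regular_splitting_II K U Fb Gb"
    and ge: "K_ge K (Gb ** matrix_inv Fb) (G ** matrix_inv F)"
  shows "K_ge K (splitting_series F G s) (splitting_series Fb Gb s)"
proof -
  have F: "U = F - G" "invertible F" "K_nonneg K (G ** matrix_inv F)"
    and Fb: "U = Fb - Gb" "invertible Fb"
    and U_inv: "invertible U" "K_nonneg K (matrix_inv U)"
    using FG FGb U unfolding K_weak_regular_splitting_II_def K_monotone_def by auto
  have "splitting_series F G s - splitting_series Fb Gb s
      = matrix_inv U ** (U ** splitting_series F G s - U ** splitting_series Fb Gb s)"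
    by (simp add: matrix_diff_ldistrib matrix_inv_mult_cancel_left[OF U_inv(1)])
  also have "\<dots> = matrix_inv U ** (mpow (Gb ** matrix_inv Fb) s - mpow (G ** matrix_inv F) s)"
    using splitting_series_mult_left[OF F(2), of G s] splitting_series_mult_left[OF Fb(2), of Gb s]
    by (simp add: flip: F(1) Fb(1))
  finally show ?thesis
    using K_ge_mpow[OF K F(3) ge] U_inv(2) by (simp add: K_ge_def K_nonneg_mult)
qed

lemma K_nonneg_inv_mult_if_K_ge:
  assumes U: "K_monotone K U" and FG: "K_weak_regular_splitting_II K U F G"
    and ge: "K_ge K G (G ** matrix_inv F ** G)"
  shows "K_nonneg K (matrix_inv F ** G)"
proof -
  have F: "U = F - G" "invertible F" and U_inv: "invertible U" "K_nonneg K (matrix_inv U)"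
    using FG U unfolding K_weak_regular_splitting_II_def K_monotone_def by auto
  have "matrix_inv F ** G = matrix_inv U ** (U ** (matrix_inv F ** G))"
    by (simp add: matrix_inv_mult_cancel_left[OF U_inv(1)])
  also have "U ** (matrix_inv F ** G) = U ** matrix_inv F ** G"
    by (simp add: matrix_mul_assoc)
  also have "U ** matrix_inv F ** G = G - G ** matrix_inv F ** G"
    by (simp add: F(1) matrix_diff_rdistrib matrix_inv_right[OF F(2)])
  finally show ?thesis
    using ge U_inv(2) by (simp add: K_ge_def K_nonneg_mult)
qed

lemma K_nonneg_id_minus_mult_splitting_series:
  assumes K: "proper_cone K" and AUV: "K_regular_splitting K A U V"
    and FG: "K_weak_regular_splitting_II K U F G"
  shows "K_nonneg K (mat 1 - A ** splitting_series F G s)"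
proof -
  have A: "A = U - V" "K_nonneg K V" and F: "U = F - G" "invertible F" "K_nonneg K (G ** matrix_inv F)"
    using AUV FG unfolding K_regular_splitting_def K_weak_regular_splitting_II_def by auto
  have "mat 1 - A ** splitting_series F G s = mpow (G ** matrix_inv F) s + V ** splitting_series F G s"
    using splitting_series_mult_left[OF F(2), of G s] by (simp add: A(1) matrix_diff_rdistrib flip: F(1))
  then show ?thesis
    using A(2) F(3) splitting_series_K_nonneg[OF K FG]
    by (simp add: K_nonneg_add[OF K] K_nonneg_mult K_nonneg_mpow)
qed

lemma spectral_radius_splitting_iteration_less_1:
  assumes K: "proper_cone K" and A: "K_monotone K A" and AUV: "K_regular_splitting K A U V"
    and FG: "K_weak_regular_splitting_II K U F G" and s: "0 < s"
  shows "spectral_radius (mat 1 - splitting_series F G s ** A) < 1"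
proof -
  have U: "K_monotone K U" using AUV by (rule K_regular_splitting_K_monotone)
  note R = splitting_series_invertible[OF K U FG s] splitting_series_K_nonneg[OF K FG]
  note M = K_nonneg_id_minus_mult_splitting_series[OF K AUV FG]
  have "spectral_radius (mat 1 - A ** splitting_series F G s) < 1"
    using K_monotone_product_powers_tendsto_zero[OF K A R M refl]
    by (intro spectral_radius_less_of_powers_decay) simp_all
  then show ?thesis by (simp add: spectral_radius_id_minus_mult_commute[OF R(1)])
qed

lemma spectral_radius_splitting_iteration_le:
  assumes K: "proper_cone K" and A: "K_monotone K A" and AUV: "K_regular_splitting K A U V"
    and FG: "K_weak_regular_splitting_II K U F G" and FGb: "K_weak_regular_splitting_II K U Fb Gb"
    and s: "0 < s" and H: "K_nonneg K (matrix_inv F ** G)"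
    and ge: "K_ge K (Gb ** matrix_inv Fb) (G ** matrix_inv F)"
  shows "spectral_radius (mat 1 - splitting_series F G s ** A)
    \<le> spectral_radius (mat 1 - splitting_series Fb Gb s ** A)"
proof -
  define R Rb where "R = splitting_series F G s" and "Rb = splitting_series Fb Gb s"
  have U: "K_monotone K U" using AUV by (rule K_regular_splitting_K_monotone)
  have A_inv: "invertible A" "K_nonneg K (matrix_inv A)"
    using A unfolding K_monotone_def by auto
  have F: "U = F - G" "invertible F" and V: "A = U - V" "K_nonneg K V"
    using FG AUV unfolding K_weak_regular_splitting_II_def K_regular_splitting_def by auto
  have "mat 1 - R ** A = mpow (matrix_inv F ** G) s + R ** V"
    using splitting_series_mult_right[OF F(2), of G s]
    by (simp add: R_def V(1) matrix_diff_ldistrib flip: F(1))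
  then have T: "K_nonneg K (mat 1 - R ** A)"
    using H V(2) splitting_series_K_nonneg[OF K FG]
    by (simp add: R_def K_nonneg_add[OF K] K_nonneg_mult K_nonneg_mpow)
  have "matrix_inv A ** (mat 1 - A ** Rb) - (mat 1 - R ** A) ** matrix_inv A = R - Rb"
    by (simp add: matrix_diff_ldistrib matrix_diff_rdistrib matrix_inv_mult_cancel_left[OF A_inv(1)]
        matrix_mult_inv_cancel_right[OF A_inv(1)])
  then have "K_ge K (matrix_inv A ** (mat 1 - A ** Rb)) ((mat 1 - R ** A) ** matrix_inv A)"
    using splitting_series_K_ge[OF K U FG FGb ge] by (simp add: K_ge_def R_def Rb_def)
  then have "spectral_radius (mat 1 - R ** A) \<le> spectral_radius (mat 1 - A ** Rb)"
    using K_nonneg_id_minus_mult_splitting_series[OF K AUV FGb]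
    by (intro spectral_radius_le_of_K_ge_intertwined[OF K invertible_matrix_inv A_inv(2) T])
      (simp_all add: A_inv(1) Rb_def)
  then show ?thesis
    using splitting_series_invertible[OF K U FGb s]
    by (simp add: R_def Rb_def spectral_radius_id_minus_mult_commute)
qed

theorem theorem3p9:
  fixes K :: "(real ^ 'n) set"
    and A U V F G Fb Gb :: "real ^ 'n ^ 'n"
    and s :: nat
  assumes "proper_cone K"
    and "K_monotone K A"
    and "K_regular_splitting K A U V"
    and "K_weak_regular_splitting_II K U F G"
    and "K_weak_regular_splitting_II K U Fb Gb"
    and "V ** matrix_inv F ** G = G ** matrix_inv F ** V"
    and "V ** matrix_inv Fb ** Gb = Gb ** matrix_inv Fb ** V"
    and "s \<ge> 1"
    and "K_ge K G (G ** matrix_inv F ** G)"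
    and "K_ge K (Gb ** matrix_inv Fb) (G ** matrix_inv F)"
  shows "spectral_radius
           (mpow (matrix_inv F ** G) s +
            (\<Sum>j<s. mpow (matrix_inv F ** G) j ** matrix_inv F ** V))
         \<le> spectral_radius
           (mpow (matrix_inv Fb ** Gb) s +
            (\<Sum>j<s. mpow (matrix_inv Fb ** Gb) j ** matrix_inv Fb ** V))
       \<and> spectral_radius
           (mpow (matrix_inv Fb ** Gb) s +
            (\<Sum>j<s. mpow (matrix_inv Fb ** Gb) j ** matrix_inv Fb ** V)) < 1"
proof -
  note K = assms(1) and A = assms(2) and AUV = assms(3) and FG = assms(4) and FGb = assms(5)
  have s: "0 < s" using assms(8) by simp
  have F: "invertible F" "A = F - G - V" and Fb: "invertible Fb" "A = Fb - Gb - V"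
    using AUV FG FGb unfolding K_regular_splitting_def K_weak_regular_splitting_II_def by auto
  have H: "K_nonneg K (matrix_inv F ** G)"
    using K_regular_splitting_K_monotone[OF AUV] FG assms(9) by (rule K_nonneg_inv_mult_if_K_ge)
  show ?thesis
    unfolding iteration_matrix_eq[OF F(1)] iteration_matrix_eq[OF Fb(1)]
      F(2)[symmetric] Fb(2)[symmetric]
    using spectral_radius_splitting_iteration_le[OF K A AUV FG FGb s H assms(10)]
      spectral_radius_splitting_iteration_less_1[OF K A AUV FGb s]
    by simp
qed

end
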